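(* Let $\phi>1$ be an integer. For arbitrarily large integers $n$ there exist (families of) feasible $n$-node graphs with election index $\phi$ such that leader election in time $\phi$ in these graphs requires advice of size $\Omega\!\left(n(\log\log n)^2/\log n\right)$. Precisely: there is a constant $c>0$ such that for infinitely many integers $n$ there is a finite family $\mathcal{F}_n$ of feasible $n$-node graphs, each with election index $\phi$, such that for every deterministic leader election algorithm with advice that performs leader election in time $\phi$ in every graph of $\mathcal{F}_n$, some graph of $\mathcal{F}_n$ receives advice of length at least $c\, n(\log\log n)^2/\log n$.
   Context: A graph is a simple undirected connected finite graph whose nodes have no identifiers; at each node $v$ of degree $d$ the incident edges carry distinct port numbers $0,\dots,d-1$ (local to each node). The truncated view $\mathcal{V}^0(v)$ is a single node; $\mathcal{V}^{l+1}(v)$ is the port-labelled rooted tree whose root has, for every neighbour $v_i$ of $v$, a child $x_i$ joined by an edge carrying the same two port numbers as $\{v,v_i\}$ (the one at $v$ at the root side), and $x_i$ is the root of a copy of $\mathcal{V}^l(v_i)$. The augmented truncated view $\mathcal{B}^l(v)$ is $\mathcal{V}^l(v)$ with each leaf labelled by the degree in $G$ of the node it represents. A graph is feasible if for some $l$ the views $\mathcal{B}^l(v)$ of all nodes are pairwise distinct; its election index is the smallest such $l$. Model (LOCAL): synchronous rounds, all nodes start simultaneously, in each round every node exchanges arbitrary messages with all neighbours and computes arbitrarily. Leader election: every node $v$ outputs a sequence $(p_1,q_1,\dots,p_k,q_k)$ of nonnegative integers describing a simple path starting at $v$ whose $i$-th edge has port $p_i$ at its endpoint closer to $v$ and $q_i$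 at the other endpoint; all these paths must end at a common node. Time is the number of rounds until all nodes output. Advice: an oracle knowing the entire port-labelled graph gives the same binary string to all nodes before the start; its length is the size of advice. In a deterministic algorithm with advice, the actions/output of node $v$ in round $r$ are a function of the advice and of $\mathcal{B}^r(v)$. Logarithms are base 2. *)

theory Defs
  imports Complex_Main
begin

text \<open>Nodes are represented as 0..<gsize G; these numbers are
  never visible to the algorithm, which only sees augmented truncated views.
  port G v w is the port number at v of the edge {v,w}.\<close>

record pgraph =
  gsize :: nat
  adj :: "nat \<Rightarrow> nat \<Rightarrow> bool"
  port :: "nat \<Rightarrow> nat \<Rightarrow> nat"

definition deg :: "pgraph \<Rightarrow> nat \<Rightarrow> nat" where
  "deg G v = card {w. adj G v w}"

definition wf_pgraph :: "pgraph \<Rightarrow> bool" where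
  "wf_pgraph G \<longleftrightarrow>
     gsize G \<ge> 1 \<and>
     (\<forall>u w. adj G u w \<longrightarrow> u < gsize G \<and> w < gsize G) \<and>
     (\<forall>u w. adj G u w \<longrightarrow> adj G w u) \<and>
     (\<forall>u. \<not> adj G u u) \<and>
     (\<forall>u<gsize G. \<forall>w<gsize G. (adj G)\<^sup>*\<^sup>* u w) \<and>
     (\<forall>v<gsize G. bij_betw (port G v) {w. adj G v w} {0..<deg G v})"

definition nbr :: "pgraph \<Rightarrow> nat \<Rightarrow> nat \<Rightarrow> nat" where
  "nbr G v p = (THE w. adj G v w \<and> port G v w = p)"

text \<open>Port-labelled rooted trees: a leaf carries a degree label; an inner node carries the
  list of its children ordered by the port at the root, each child given together with the
  two port numbers of the connecting edge (port at the parent side, port at the child side).\<close>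
datatype view = VLeaf nat | VNode "(nat \<times> nat \<times> view) list"

fun bview :: "pgraph \<Rightarrow> nat \<Rightarrow> nat \<Rightarrow> view" where
  "bview G 0 v = VLeaf (deg G v)"
| "bview G (Suc l) v =
     VNode (map (\<lambda>p. (p, port G (nbr G v p) v, bview G l (nbr G v p))) [0..<deg G v])"

definition feasible :: "pgraph \<Rightarrow> bool" where
  "feasible G \<longleftrightarrow> (\<exists>l. inj_on (bview G l) {0..<gsize G})"

definition election_index :: "pgraph \<Rightarrow> nat" where
  "election_index G = (LEAST l. inj_on (bview G l) {0..<gsize G})"

fun follow :: "pgraph \<Rightarrow> nat \<Rightarrow> (nat \<times> nat) list \<Rightarrow> nat list option" where
  "follow G v [] = Some [v]"
| "follow G v ((p, q) # rest) =
     (if p < deg G v \<and> port G (nbr G v p) v = q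
      then map_option (Cons v) (follow G (nbr G v p) rest) else None)"

definition simple_path_to :: "pgraph \<Rightarrow> nat \<Rightarrow> (nat \<times> nat) list \<Rightarrow> nat \<Rightarrow> bool" where
  "simple_path_to G v out l \<longleftrightarrow>
     (\<exists>vs. follow G v out = Some vs \<and> distinct vs \<and> last vs = l)"

text \<open>A deterministic algorithm with advice: A adv r B is the output (if any) produced in
  round r by a node whose augmented truncated view of depth r is B, given advice adv.\<close>
type_synonym algorithm = "bool list \<Rightarrow> nat \<Rightarrow> view \<Rightarrow> (nat \<times> nat) list option"

definition output_round :: "algorithm \<Rightarrow> bool list \<Rightarrow> pgraph \<Rightarrow> nat \<Rightarrow> nat" where
  "output_round A adv G v = (LEAST r. A adv r (bview G r v) \<noteq> None)"

definition node_output :: "algorithm \<Rightarrow> bool list \<Rightarrow> pgraph \<Rightarrow> nat \<Rightarrow> (nat \<times> nat) list" where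
  "node_output A adv G v = the (A adv (output_round A adv G v) (bview G (output_round A adv G v) v))"

definition elects_in_time :: "algorithm \<Rightarrow> pgraph \<Rightarrow> nat \<Rightarrow> bool list \<Rightarrow> bool" where
  "elects_in_time A G t adv \<longleftrightarrow>
     (\<forall>v<gsize G. \<exists>r\<le>t. A adv r (bview G r v) \<noteq> None) \<and>
     (\<exists>l<gsize G. \<forall>v<gsize G. simple_path_to G v (node_output A adv G v) l)"

end

theory Submission
  imports Defs "HOL-Combinatorics.Permutations" "HOL-Library.Infinite_Set"
begin

text \<open>A hub carries \<open>2^B\<close> arms of length \<open>h\<close>, each ending in a tip that identifies its arm; a
  permutation \<open>g\<close> decides which arm hangs at which hub port. A tip is more than \<open>h\<close> away from the
  hub, so within time \<open>h\<close> it sees the same view whatever \<open>g\<close> is, and with equal advice it outputs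
  the same port sequence. Unless the leader lies in its own arm, that sequence enters the hub and
  records the hub port of its arm. For two permutations differing at some port \<open>p\<close>, the arms
  \<open>g\<^sub>1 p\<close> and \<open>g\<^sub>2 p\<close> both sit at different ports in the two graphs, so the leader would have to
  lie in both arms. Hence the \<open>(2^B)!\<close> graphs need pairwise different advice, of length about
  \<open>B 2^B\<close>, which is linear in the number \<open>n = \<Theta>(2^B (h + B))\<close> of nodes; a linear bound
  dominates \<open>n (log log n)^2 / log n\<close>.\<close>

lemma wf_pgraphD:
  assumes "wf_pgraph G"
  shows "\<And>u w. adj G u w \<Longrightarrow> u < gsize G \<and> w < gsize G" "\<And>u w. adj G u w \<Longrightarrow> adj G w u"
    "\<And>v. v < gsize G \<Longrightarrow> bij_betw (port G v) {w. adj G v w} {0..<deg G v}"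
  using assms unfolding wf_pgraph_def by auto

lemma nbr_port:
  assumes "wf_pgraph G" "adj G v w"
  shows "nbr G v (port G v w) = w"
proof -
  have "v < gsize G" using wf_pgraphD(1)[OF assms] by simp
  then have b: "bij_betw (port G v) {w. adj G v w} {0..<deg G v}" using wf_pgraphD(3)[OF assms(1)] by blast
  show ?thesis unfolding nbr_def
  proof (rule the_equality)
    fix w' assume "adj G v w' \<and> port G v w' = port G v w"
    then show "w' = w" using b assms(2) unfolding bij_betw_def inj_on_def by auto
  qed (use assms(2) in simp)
qed

lemma adj_nbr:
  assumes "wf_pgraph G" "v < gsize G" "p < deg G v"
  shows "adj G v (nbr G v p)"
proof -
  have "p \<in> port G v ` {w. adj G v w}"
    using wf_pgraphD(3)[OF assms(1,2)] assms(3) unfolding bij_betw_def by auto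
  then obtain w where w: "adj G v w" "port G v w = p" by auto
  then show ?thesis using nbr_port[OF assms(1) w(1)] by simp
qed

lemma nbr_lt_gsize: "wf_pgraph G \<Longrightarrow> v < gsize G \<Longrightarrow> p < deg G v \<Longrightarrow> nbr G v p < gsize G"
  using adj_nbr wf_pgraphD(1) by blast

lemma nbr_back:
  assumes "wf_pgraph G" "v < gsize G" "p < deg G v"
  shows "nbr G (nbr G v p) (port G (nbr G v p) v) = v"
  using nbr_port[OF assms(1) wf_pgraphD(2)[OF assms(1) adj_nbr[OF assms]]] .

lemma bview_eq_imp_deg_eq: "bview G l u = bview G l v \<Longrightarrow> deg G u = deg G v"
proof (cases l)
  case (Suc m)
  assume "bview G l u = bview G l v"
  then have "length (map (\<lambda>p. (p, port G (nbr G u p) u, bview G m (nbr G u p))) [0..<deg G u])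
    = length (map (\<lambda>p. (p, port G (nbr G v p) v, bview G m (nbr G v p))) [0..<deg G v])"
    using Suc by (simp only: bview.simps view.inject)
  then show ?thesis by simp
qed simp

lemma bview_Suc_eqD:
  assumes "bview G (Suc m) u = bview G (Suc m) v" "p < deg G u"
  shows "port G (nbr G u p) u = port G (nbr G v p) v"
    and "bview G m (nbr G u p) = bview G m (nbr G v p)"
proof -
  let ?f = "\<lambda>u p. (p, port G (nbr G u p) u, bview G m (nbr G u p))"
  have deg: "deg G u = deg G v" using bview_eq_imp_deg_eq[OF assms(1)] .
  have "?f u p = map (?f u) [0..<deg G u] ! p" using assms(2) by simp
  also have "\<dots> = map (?f v) [0..<deg G v] ! p"
    using assms(1) by (simp only: bview.simps view.inject)
  also have "\<dots> = ?f v p" using assms(2) deg by simp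
  finally show "port G (nbr G u p) u = port G (nbr G v p) v"
    and "bview G m (nbr G u p) = bview G m (nbr G v p)" by (simp_all only: prod.inject)
qed

lemma bview_Suc_eqI:
  assumes "deg G u = deg G v"
    and "\<And>p. p < deg G u \<Longrightarrow> port G (nbr G u p) u = port G (nbr G v p) v"
    and "\<And>p. p < deg G u \<Longrightarrow> bview G m (nbr G u p) = bview G m (nbr G v p)"
  shows "bview G (Suc m) u = bview G (Suc m) v"
  using assms by (simp del: upt.simps)

fun walk_ok :: "pgraph \<Rightarrow> nat \<Rightarrow> nat list \<Rightarrow> bool" where
  "walk_ok G v [] = True"
| "walk_ok G v (p # ps) \<longleftrightarrow> p < deg G v \<and> walk_ok G (nbr G v p) ps"

fun walk_end :: "pgraph \<Rightarrow> nat \<Rightarrow> nat list \<Rightarrow> nat" where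
  "walk_end G v [] = v"
| "walk_end G v (p # ps) = walk_end G (nbr G v p) ps"

definition bview_unique :: "pgraph \<Rightarrow> nat \<Rightarrow> nat \<Rightarrow> bool" where
  "bview_unique G m z \<longleftrightarrow> (\<forall>z'<gsize G. bview G m z' = bview G m z \<longrightarrow> z' = z)"

text \<open>Equal views of depth \<open>l\<close> let the same port walk be followed from \<open>v\<close> and from \<open>w\<close>;
  if it ends in a node recognised by its view of the remaining depth, both walks end there, and
  retracing the walk backwards through the (equal) return ports gives \<open>v = w\<close>.\<close>
lemma bview_eq_by_unique_walk_end:
  assumes wf: "wf_pgraph G"
  shows "v < gsize G \<Longrightarrow> w < gsize G \<Longrightarrow> bview G l v = bview G l w \<Longrightarrow> walk_ok G v ps
    \<Longrightarrow> length ps \<le> l \<Longrightarrow> bview_unique G (l - length ps) (walk_end G v ps) \<Longrightarrow> v = w"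
proof (induction ps arbitrary: v w l)
  case Nil
  have "bview_unique G l v" using Nil.prems(6) by simp
  then show ?case using Nil.prems(2,3) unfolding bview_unique_def by simp
next
  case (Cons p ps)
  obtain m where l: "l = Suc m" using Cons.prems(5) by (cases l) auto
  have p: "p < deg G v" using Cons.prems(4) by simp
  have eq: "bview G (Suc m) v = bview G (Suc m) w" using Cons.prems(3) l by simp
  have pw: "p < deg G w" using p bview_eq_imp_deg_eq[OF eq] by simp
  have "nbr G v p = nbr G w p"
  proof (rule Cons.IH)
    show "nbr G v p < gsize G" "nbr G w p < gsize G"
      using nbr_lt_gsize[OF wf] Cons.prems(1,2) p pw by auto
    show "bview G m (nbr G v p) = bview G m (nbr G w p)" using bview_Suc_eqD(2)[OF eq p] .
    show "walk_ok G (nbr G v p) ps" using Cons.prems(4) by simp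
    show "length ps \<le> m" using Cons.prems(5) l by simp
    show "bview_unique G (m - length ps) (walk_end G (nbr G v p) ps)" using Cons.prems(6) l by simp
  qed
  then have "nbr G (nbr G v p) (port G (nbr G v p) v) = nbr G (nbr G w p) (port G (nbr G w p) w)"
    using bview_Suc_eqD(1)[OF eq p] by simp
  then show "v = w" using nbr_back[OF wf Cons.prems(1) p] nbr_back[OF wf Cons.prems(2) pw] by simp
qed

subsection \<open>Views far from a node whose ports are changed\<close>

fun nbhd :: "pgraph \<Rightarrow> nat \<Rightarrow> nat \<Rightarrow> nat set" where
  "nbhd G 0 v = {v}"
| "nbhd G (Suc k) v = insert v (\<Union> {nbhd G k w | w. adj G v w})"

lemma nbhd_self: "v \<in> nbhd G k v"
  by (cases k) auto

lemma nbhd_Suc_subset: "adj G v w \<Longrightarrow> nbhd G k w \<subseteq> nbhd G (Suc k) v"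
  by auto

lemma nbhd_potential_le:
  assumes "\<And>u w. adj G u w \<Longrightarrow> f u \<le> Suc (f w)"
  shows "x \<in> nbhd G k v \<Longrightarrow> f v \<le> f x + k"
proof (induction k arbitrary: v)
  case (Suc k)
  show ?case
  proof (cases "x = v")
    case False
    then obtain w where "adj G v w" "x \<in> nbhd G k w" using Suc.prems by auto
    then show ?thesis using Suc.IH assms by fastforce
  qed simp
qed simp

lemma bview_eq_if_nbhd_avoids:
  assumes wf: "wf_pgraph G1" and adj: "adj G2 = adj G1"
    and port: "\<And>u. u \<noteq> c \<Longrightarrow> port G2 u = port G1 u"
  shows "v < gsize G1 \<Longrightarrow> c \<notin> nbhd G1 l v \<Longrightarrow> bview G2 l v = bview G1 l v"
proof (induction l arbitrary: v)
  case 0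
  then show ?case using adj by (simp add: deg_def)
next
  case (Suc l)
  have deg: "deg G2 v = deg G1 v" using adj by (simp add: deg_def)
  have "v \<noteq> c" using Suc.prems(2) by auto
  then have nbr: "nbr G2 v p = nbr G1 v p" for p using adj port by (simp add: nbr_def)
  have "bview G2 l (nbr G1 v p) = bview G1 l (nbr G1 v p)"
    and "port G2 (nbr G1 v p) v = port G1 (nbr G1 v p) v" if p: "p < deg G1 v" for p
  proof -
    have a: "adj G1 v (nbr G1 v p)" using adj_nbr[OF wf Suc.prems(1) p] .
    then have "nbhd G1 l (nbr G1 v p) \<subseteq> nbhd G1 (Suc l) v" by (rule nbhd_Suc_subset)
    then have far: "c \<notin> nbhd G1 l (nbr G1 v p)" using Suc.prems(2) by blast
    then show "bview G2 l (nbr G1 v p) = bview G1 l (nbr G1 v p)"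
      using Suc.IH wf_pgraphD(1)[OF wf a] by simp
    have "nbr G1 v p \<noteq> c" using far nbhd_self by metis
    then show "port G2 (nbr G1 v p) v = port G1 (nbr G1 v p) v" using port by simp
  qed
  then show ?case using deg nbr by simp
qed

lemma node_output_eq_if_bview_eq:
  assumes "\<And>r. r \<le> t \<Longrightarrow> bview G1 r v = bview G2 r v"
    and "\<exists>r\<le>t. A s r (bview G1 r v) \<noteq> None"
  shows "node_output A s G1 v = node_output A s G2 v"
proof -
  let ?P = "\<lambda>G r. A s r (bview G r v) \<noteq> None"
  obtain r where r: "r \<le> t" "?P G1 r" using assms(2) by auto
  have r0: "output_round A s G1 v \<le> t"
    unfolding output_round_def using Least_le[of "?P G1" r] r by simp
  have "(LEAST r. ?P G2 r) = (LEAST r. ?P G1 r)"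
  proof (rule Least_equality)
    show "?P G2 (LEAST r. ?P G1 r)"
      using LeastI[of "?P G1" r] r(2) assms(1) r0 by (simp add: output_round_def)
    show "(LEAST r. ?P G1 r) \<le> m" if m: "?P G2 m" for m
    proof (rule ccontr)
      assume "\<not> (LEAST r. ?P G1 r) \<le> m"
      then have "m < (LEAST r. ?P G1 r)" by simp
      moreover have "m \<le> t" using calculation r0 by (simp add: output_round_def)
      ultimately show False using not_less_Least[of m "?P G1"] m assms(1) by simp
    qed
  qed
  then have "output_round A s G2 v = output_round A s G1 v" by (simp add: output_round_def)
  then show ?thesis using assms(1)[OF r0] by (simp add: node_output_def)
qed

subsection \<open>Leader election cannot cross a node with unknown ports\<close>

lemma follow_nonempty: "follow G v ps = Some vs \<Longrightarrow> vs \<noteq> []"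
  by (induction ps arbitrary: v vs) (auto split: if_splits)

lemma follow_None_if_visits:
  assumes wf: "wf_pgraph G1" and adj: "adj G2 = adj G1"
    and port: "\<And>u. u \<noteq> c \<Longrightarrow> port G2 u = port G1 u"
    and label: "\<And>u w. adj G1 u w \<Longrightarrow> u \<noteq> c \<Longrightarrow> w \<noteq> c \<Longrightarrow> lab u = lab w"
    and entry: "\<And>u. adj G1 u c \<Longrightarrow> lab u = k \<Longrightarrow> port G1 c u \<noteq> port G2 c u"
  shows "follow G1 v ps = Some vs \<Longrightarrow> c \<in> set vs \<Longrightarrow> v \<noteq> c \<Longrightarrow> v < gsize G1 \<Longrightarrow> lab v = k
    \<Longrightarrow> follow G2 v ps = None"
proof (induction ps arbitrary: v vs)
  case (Cons pq ps)
  obtain p q where pq: "pq = (p, q)" by (cases pq)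
  let ?z = "nbr G1 v p"
  have step: "p < deg G1 v" "port G1 ?z v = q" using Cons.prems(1) pq by (auto split: if_splits)
  obtain vs' where vs': "follow G1 ?z ps = Some vs'" "vs = v # vs'"
    using Cons.prems(1) pq step by auto
  have nbr: "nbr G2 v p = ?z" using adj port[OF Cons.prems(3)] by (simp add: nbr_def)
  have a: "adj G1 v ?z" using adj_nbr[OF wf Cons.prems(4) step(1)] .
  show ?case
  proof (cases "?z = c")
    case True
    then have "port G2 ?z v \<noteq> q" using entry[of v] a step(2) Cons.prems(5) by auto
    then show ?thesis using pq nbr by simp
  next
    case False
    have "follow G2 ?z ps = None"
      using Cons.IH[OF vs'(1)] Cons.prems(2,3,5) vs'(2) False wf_pgraphD(1)[OF wf a]
        label[OF a Cons.prems(3) False] by auto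
    then show ?thesis using pq nbr by simp
  qed
qed simp

lemma follow_avoiding_keeps_label:
  assumes wf: "wf_pgraph G"
    and label: "\<And>u w. adj G u w \<Longrightarrow> u \<noteq> c \<Longrightarrow> w \<noteq> c \<Longrightarrow> lab u = lab w"
  shows "follow G v ps = Some vs \<Longrightarrow> c \<notin> set vs \<Longrightarrow> v < gsize G \<Longrightarrow> x \<in> set vs \<Longrightarrow> lab x = lab v"
proof (induction ps arbitrary: v vs)
  case (Cons pq ps)
  obtain p q where pq: "pq = (p, q)" by (cases pq)
  let ?z = "nbr G v p"
  have step: "p < deg G v" using Cons.prems(1) pq by (auto split: if_splits)
  obtain vs' where vs': "follow G ?z ps = Some vs'" "vs = v # vs'"
    using Cons.prems(1) pq by (auto split: if_splits)
  have a: "adj G v ?z" using adj_nbr[OF wf Cons.prems(3) step] .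
  have z: "?z \<in> set vs'" using vs'(1) by (cases ps) (auto split: if_splits)
  show ?case
  proof (cases "x = v")
    case False
    then have "lab x = lab ?z"
      using Cons.IH[OF vs'(1)] Cons.prems(2,4) vs'(2) wf_pgraphD(1)[OF wf a] by auto
    also have "\<dots> = lab v" using label[OF a] Cons.prems(2) vs'(2) z by (metis list.set_intros)
    finally show ?thesis .
  qed simp
qed simp

text \<open>With the same advice, \<open>x\<close> outputs the same port sequence in both graphs. If every entry into
  \<open>c\<close> from the part of \<open>x\<close> carries different ports in \<open>G1\<close> and \<open>G2\<close>, that sequence cannot pass
  through \<open>c\<close> in both graphs, so the leader of \<open>G1\<close> lies in the part of \<open>x\<close>.\<close>
lemma leader_label_eq:
  assumes wf: "wf_pgraph G1" and size: "gsize G2 = gsize G1" and adj: "adj G2 = adj G1"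
    and port: "\<And>u. u \<noteq> c \<Longrightarrow> port G2 u = port G1 u"
    and label: "\<And>u w. adj G1 u w \<Longrightarrow> u \<noteq> c \<Longrightarrow> w \<noteq> c \<Longrightarrow> lab u = lab w"
    and x: "x < gsize G1" "x \<noteq> c" "\<And>r. r \<le> t \<Longrightarrow> c \<notin> nbhd G1 r x"
    and entry: "\<And>u. adj G1 u c \<Longrightarrow> lab u = lab x \<Longrightarrow> port G1 c u \<noteq> port G2 c u"
    and E1: "elects_in_time A G1 t s" and E2: "elects_in_time A G2 t s"
    and leader: "\<forall>v<gsize G1. simple_path_to G1 v (node_output A s G1 v) l"
  shows "lab l = lab x"
proof -
  obtain l2 where "\<forall>v<gsize G2. simple_path_to G2 v (node_output A s G2 v) l2"
    using E2 unfolding elects_in_time_def by auto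
  moreover have "node_output A s G2 x = node_output A s G1 x"
  proof (rule node_output_eq_if_bview_eq[symmetric])
    show "bview G1 r x = bview G2 r x" if "r \<le> t" for r
      using bview_eq_if_nbhd_avoids[OF wf adj port x(1) x(3)[OF that]] by simp
    show "\<exists>r\<le>t. A s r (bview G1 r x) \<noteq> None" using E1 x(1) unfolding elects_in_time_def by auto
  qed
  ultimately obtain vs2 where vs2: "follow G2 x (node_output A s G1 x) = Some vs2"
    using x(1) size unfolding simple_path_to_def by auto
  obtain vs where vs: "follow G1 x (node_output A s G1 x) = Some vs" "last vs = l"
    using leader x(1) unfolding simple_path_to_def by auto
  have "c \<notin> set vs"
  proof
    assume "c \<in> set vs"
    then have "follow G2 x (node_output A s G1 x) = None"
      using follow_None_if_visits[where lab = lab and k = "lab x", OF wf adj port label entry vs(1)] x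
      by blast
    then show False using vs2 by simp
  qed
  moreover have "last vs \<in> set vs" using follow_nonempty[OF vs(1)] by simp
  ultimately show ?thesis using follow_avoiding_keeps_label[OF wf label vs(1)] vs(2) x(1) by simp
qed

fun index_in :: "'a \<Rightarrow> 'a list \<Rightarrow> nat" where
  "index_in x [] = 0"
| "index_in x (y # ys) = (if x = y then 0 else Suc (index_in x ys))"

lemma index_in_lt: "x \<in> set xs \<Longrightarrow> index_in x xs < length xs"
  by (induction xs) auto

lemma nth_index_in: "x \<in> set xs \<Longrightarrow> xs ! index_in x xs = x"
  by (induction xs) auto

lemma index_in_nth: "distinct xs \<Longrightarrow> p < length xs \<Longrightarrow> index_in (xs ! p) xs = p"
  by (induction xs arbitrary: p) (auto simp: less_Suc_eq_0_disj)

definition pgraph_of_lists :: "'a set \<Rightarrow> ('a \<Rightarrow> 'a list) \<Rightarrow> ('a \<Rightarrow> nat) \<Rightarrow> pgraph" where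
  "pgraph_of_lists V nl enc = \<lparr>gsize = card V,
     adj = (\<lambda>u v. u < card V \<and> v < card V \<and> inv_into V enc v \<in> set (nl (inv_into V enc u))),
     port = (\<lambda>u v. if u < card V then index_in (inv_into V enc v) (nl (inv_into V enc u)) else 0)\<rparr>"

locale nbr_lists =
  fixes V :: "'a set" and nl :: "'a \<Rightarrow> 'a list" and enc :: "'a \<Rightarrow> nat" and root :: 'a
  assumes finite_V: "finite V" and enc_bij: "bij_betw enc V {0..<card V}" and root_in: "root \<in> V"
    and distinct_nl: "\<And>x. x \<in> V \<Longrightarrow> distinct (nl x)"
    and nl_subset: "\<And>x. x \<in> V \<Longrightarrow> set (nl x) \<subseteq> V"
    and nl_irrefl: "\<And>x. x \<in> V \<Longrightarrow> x \<notin> set (nl x)"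
    and nl_sym: "\<And>x y. x \<in> V \<Longrightarrow> y \<in> set (nl x) \<Longrightarrow> x \<in> set (nl y)"
    and nl_connected: "\<And>x. x \<in> V \<Longrightarrow> (\<lambda>a b. b \<in> set (nl a))\<^sup>*\<^sup>* x root"
begin

abbreviation "G \<equiv> pgraph_of_lists V nl enc"

lemma inv_enc: "x \<in> V \<Longrightarrow> inv_into V enc (enc x) = x"
  using enc_bij by (simp add: bij_betw_def inv_into_f_f)

lemma enc_lt: "x \<in> V \<Longrightarrow> enc x < card V"
  using enc_bij by (auto simp: bij_betw_def)

lemma ex_enc: "u < card V \<Longrightarrow> \<exists>x\<in>V. u = enc x"
  using enc_bij by (auto simp: bij_betw_def)

lemma enc_eq_iff: "x \<in> V \<Longrightarrow> y \<in> V \<Longrightarrow> enc x = enc y \<longleftrightarrow> x = y"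
  using enc_bij by (auto simp: bij_betw_def inj_on_def)

lemma gsize_G: "gsize G = card V"
  by (simp add: pgraph_of_lists_def)

lemma adj_enc: "x \<in> V \<Longrightarrow> y \<in> V \<Longrightarrow> adj G (enc x) (enc y) \<longleftrightarrow> y \<in> set (nl x)"
  by (simp add: pgraph_of_lists_def inv_enc enc_lt)

lemma port_enc: "x \<in> V \<Longrightarrow> y \<in> V \<Longrightarrow> port G (enc x) (enc y) = index_in y (nl x)"
  by (simp add: pgraph_of_lists_def inv_enc enc_lt)

lemma adj_G_iff: "adj G u w \<longleftrightarrow> (\<exists>x\<in>V. \<exists>y\<in>V. u = enc x \<and> w = enc y \<and> y \<in> set (nl x))"
proof
  assume a: "adj G u w"
  then have "u < card V" "w < card V" by (auto simp: pgraph_of_lists_def)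
  then obtain x y where "x \<in> V" "y \<in> V" "u = enc x" "w = enc y" using ex_enc by metis
  then show "\<exists>x\<in>V. \<exists>y\<in>V. u = enc x \<and> w = enc y \<and> y \<in> set (nl x)" using a adj_enc by blast
qed (auto simp: adj_enc)

lemma nbrs_enc: "x \<in> V \<Longrightarrow> {w. adj G (enc x) w} = enc ` set (nl x)"
  using nl_subset by (auto simp: adj_G_iff enc_eq_iff)

lemma deg_enc: "x \<in> V \<Longrightarrow> deg G (enc x) = length (nl x)"
proof -
  assume x: "x \<in> V"
  have "inj_on enc (set (nl x))" using enc_bij nl_subset[OF x] by (auto simp: bij_betw_def inj_on_def)
  then show ?thesis unfolding deg_def nbrs_enc[OF x]
    by (simp add: card_image distinct_card distinct_nl[OF x])
qed

lemma nbr_enc: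
  assumes x: "x \<in> V" and p: "p < length (nl x)"
  shows "nbr G (enc x) p = enc (nl x ! p)"
  unfolding nbr_def
proof (rule the_equality)
  have y: "nl x ! p \<in> V" using nl_subset[OF x] p by auto
  show "adj G (enc x) (enc (nl x ! p)) \<and> port G (enc x) (enc (nl x ! p)) = p"
    using x y p by (simp add: adj_enc port_enc index_in_nth distinct_nl)
  fix w assume w: "adj G (enc x) w \<and> port G (enc x) w = p"
  then obtain y where "y \<in> V" "w = enc y" "y \<in> set (nl x)" using adj_G_iff x enc_eq_iff by metis
  then show "w = enc (nl x ! p)" using w x nth_index_in[of y "nl x"] by (simp add: port_enc)
qed

lemma port_bij:
  assumes x: "x \<in> V"
  shows "bij_betw (port G (enc x)) {w. adj G (enc x) w} {0..<deg G (enc x)}"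
  unfolding nbrs_enc[OF x] deg_enc[OF x] bij_betw_def
proof
  have port: "port G (enc x) (enc y) = index_in y (nl x)" if "y \<in> set (nl x)" for y
    using that nl_subset[OF x] port_enc[OF x] by blast
  show "inj_on (port G (enc x)) (enc ` set (nl x))"
    by (rule inj_onI) (auto simp: port dest: arg_cong[where f = "\<lambda>p. nl x ! p"] simp: nth_index_in)
  show "port G (enc x) ` enc ` set (nl x) = {0..<length (nl x)}"
  proof
    show "port G (enc x) ` enc ` set (nl x) \<subseteq> {0..<length (nl x)}"
      by (auto simp: port index_in_lt)
    show "{0..<length (nl x)} \<subseteq> port G (enc x) ` enc ` set (nl x)"
    proof
      fix p assume "p \<in> {0..<length (nl x)}"
      then have "p < length (nl x)" by simp
      then have "port G (enc x) (enc (nl x ! p)) = p" "nl x ! p \<in> set (nl x)"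
        by (simp_all add: port index_in_nth distinct_nl[OF x])
      then show "p \<in> port G (enc x) ` enc ` set (nl x)" by (metis image_eqI)
    qed
  qed
qed

lemma wf_G: "wf_pgraph G"
proof -
  have rtr: "(adj G)\<^sup>*\<^sup>* (enc x) (enc root)" if x: "x \<in> V" for x
    using nl_connected[OF x] x
  proof (induction rule: converse_rtranclp_induct)
    case (step y z)
    then show ?case using nl_subset by (meson adj_enc converse_rtranclp_into_rtranclp subsetD)
  qed simp
  have sym: "(adj G)\<^sup>*\<^sup>* a b \<Longrightarrow> (adj G)\<^sup>*\<^sup>* b a" for a b
  proof (induction rule: rtranclp_induct)
    case (step y z)
    have "adj G z y" using step(2) nl_sym by (auto simp: adj_G_iff)
    then show ?case using step(3) by (meson converse_rtranclp_into_rtranclp)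
  qed simp
  have "1 \<le> gsize G" using root_in finite_V by (simp add: gsize_G Suc_le_eq card_gt_0_iff; blast)
  moreover have "\<forall>u w. adj G u w \<longrightarrow> u < gsize G \<and> w < gsize G" by (auto simp: pgraph_of_lists_def)
  moreover have "\<forall>u w. adj G u w \<longrightarrow> adj G w u" using nl_sym by (auto simp: adj_G_iff)
  moreover have "\<forall>u. \<not> adj G u u" using nl_irrefl by (auto simp: adj_G_iff enc_eq_iff)
  moreover have "\<forall>u<gsize G. \<forall>w<gsize G. (adj G)\<^sup>*\<^sup>* u w"
    using ex_enc rtr sym gsize_G by (metis rtranclp_trans)
  moreover have "\<forall>v<gsize G. bij_betw (port G v) {w. adj G v w} {0..<deg G v}"
    using ex_enc port_bij gsize_G by metis
  ultimately show ?thesis unfolding wf_pgraph_def by blast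
qed

end

subsection \<open>The lower-bound graphs\<close>

text \<open>Arm \<open>j\<close> ends in a tip with \<open>2B\<close> pendant leaves, where
  leaves \<open>2i\<close> and \<open>2i + 1\<close> are joined iff \<open>i \<in> code j\<close>; so tips are told apart by their views of
  depth 1. Port \<open>p\<close> of the hub leads into arm \<open>g p\<close>. The two sides \<open>Side True\<close> and \<open>Side False\<close>
  are paths of length \<open>h\<close> at the hub whose ends have equal views of every depth below \<open>h\<close>.\<close>
datatype node = Hub | Side bool nat | Arm nat nat | Tip nat | Leaf nat nat

fun valid_node :: "nat \<Rightarrow> nat \<Rightarrow> node \<Rightarrow> bool" where
  "valid_node h B Hub \<longleftrightarrow> True"
| "valid_node h B (Side s t) \<longleftrightarrow> 1 \<le> t \<and> t \<le> h"
| "valid_node h B (Arm j t) \<longleftrightarrow> j < 2^B \<and> 1 \<le> t \<and> t \<le> h"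
| "valid_node h B (Tip j) \<longleftrightarrow> j < 2^B"
| "valid_node h B (Leaf j i) \<longleftrightarrow> j < 2^B \<and> i < 2*B"

definition nodes :: "nat \<Rightarrow> nat \<Rightarrow> node set" where
  "nodes h B = {x. valid_node h B x}"

lemma in_nodes_iff [simp]: "x \<in> nodes h B \<longleftrightarrow> valid_node h B x"
  by (simp add: nodes_def)

definition partner :: "nat \<Rightarrow> nat" where
  "partner i = (if even i then Suc i else i - 1)"

fun nbrs :: "nat \<Rightarrow> nat \<Rightarrow> (nat \<Rightarrow> nat) \<Rightarrow> (nat \<Rightarrow> nat set) \<Rightarrow> node \<Rightarrow> node list" where
  "nbrs h B g code Hub = map (\<lambda>p. Arm (g p) 1) [0..<2^B] @ [Side True 1, Side False 1]"
| "nbrs h B g code (Side s t) =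
     (if t = 1 then Hub else Side s (t - 1)) # (if t < h then [Side s (Suc t)] else [])"
| "nbrs h B g code (Arm j t) = [if t = 1 then Hub else Arm j (t - 1), if t < h then Arm j (Suc t) else Tip j]"
| "nbrs h B g code (Tip j) = Arm j h # map (Leaf j) [0..<2*B]"
| "nbrs h B g code (Leaf j i) = Tip j # (if i div 2 \<in> code j then [Leaf j (partner i)] else [])"

fun hub_dist :: "nat \<Rightarrow> node \<Rightarrow> nat" where
  "hub_dist h Hub = 0"
| "hub_dist h (Side s t) = t"
| "hub_dist h (Arm j t) = t"
| "hub_dist h (Tip j) = Suc h"
| "hub_dist h (Leaf j i) = Suc (Suc h)"

fun branch :: "node \<Rightarrow> nat option" where
  "branch (Arm j t) = Some j"
| "branch (Tip j) = Some j"
| "branch (Leaf j i) = Some j"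
| "branch _ = None"

lemma partner_lt: "i < 2*B \<Longrightarrow> partner i < 2*B"
  by (auto simp: partner_def)

lemma partner_partner: "partner (partner i) = i"
  by (auto simp: partner_def)

lemma partner_neq: "partner i \<noteq> i"
  by (cases i) (auto simp: partner_def)

lemma partner_div2: "partner i div 2 = i div 2"
  by (auto simp: partner_def elim!: evenE oddE)

lemma nodes_subset: "nodes h B \<subseteq> insert Hub ((\<lambda>(s, t). Side s t) ` (UNIV \<times> {..h}))
   \<union> (\<lambda>(j, t). Arm j t) ` ({..<2^B} \<times> {..h}) \<union> Tip ` {..<2^B} \<union> (\<lambda>(j, i). Leaf j i) ` ({..<2^B} \<times> {..<2*B})"
proof
  fix x assume "x \<in> nodes h B"
  then show "x \<in> insert Hub ((\<lambda>(s, t). Side s t) ` (UNIV \<times> {..h}))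
   \<union> (\<lambda>(j, t). Arm j t) ` ({..<2^B} \<times> {..h}) \<union> Tip ` {..<2^B} \<union> (\<lambda>(j, i). Leaf j i) ` ({..<2^B} \<times> {..<2*B})"
    by (cases x) (auto simp: image_iff)
qed

lemma finite_nodes: "finite (nodes h B)"
  by (rule finite_subset[OF nodes_subset]) auto

lemma card_nodes_le: "card (nodes h B) \<le> 3 + 2*h + 2^B * (h + 2 + 2*B)"
proof -
  let ?S = "insert Hub ((\<lambda>(s, t). Side s t) ` (UNIV \<times> {..h}))"
    and ?A = "(\<lambda>(j, t). Arm j t) ` ({..<(2::nat)^B} \<times> {..h})" and ?T = "Tip ` {..<(2::nat)^B}"
    and ?L = "(\<lambda>(j, i). Leaf j i) ` ({..<(2::nat)^B} \<times> {..<2*B})"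
  have "card (nodes h B) \<le> card (?S \<union> ?A \<union> ?T \<union> ?L)"
    by (rule card_mono) (use nodes_subset in auto)
  also have "\<dots> \<le> card ?S + card ?A + card ?T + card ?L"
    by (meson add_mono card_Un_le le_refl order_trans)
  also have "card ?S \<le> 1 + 2 * (h + 1)"
    using card_insert_le_m1[of "2 * (h + 1)"] card_image_le[of "UNIV \<times> {..h}" "\<lambda>(s, t). Side s t"]
    by (simp add: card_cartesian_product card_insert_if)
  also have "card ?A \<le> 2^B * (h + 1)"
    using card_image_le[of "{..<(2::nat)^B} \<times> {..h}" "\<lambda>(j, t). Arm j t"] by (simp add: card_cartesian_product)
  also have "card ?T \<le> 2^B" using card_image_le[of "{..<(2::nat)^B}" Tip] by simp
  also have "card ?L \<le> 2^B * (2*B)"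
    using card_image_le[of "{..<(2::nat)^B} \<times> {..<2*B}" "\<lambda>(j, i). Leaf j i"] by (simp add: card_cartesian_product)
  finally show ?thesis by (simp add: algebra_simps)
qed

lemma card_nodes_ge: "2^B \<le> card (nodes h B)"
proof -
  have "card (Tip ` {..<(2::nat)^B}) \<le> card (nodes h B)"
    by (rule card_mono[OF finite_nodes]) auto
  then show ?thesis by (simp add: card_image inj_on_def)
qed

locale lb_graph =
  fixes h B :: nat and g :: "nat \<Rightarrow> nat" and code :: "nat \<Rightarrow> nat set" and enc :: "node \<Rightarrow> nat"
  assumes h_ge: "2 \<le> h" and B_ge: "1 \<le> B" and g_permutes: "g permutes {0..<2^B}"
    and code_inj: "inj_on code {0..<2^B}" and code_subset: "\<And>j. j < 2^B \<Longrightarrow> code j \<subseteq> {0..<B}"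
    and enc_bij: "bij_betw enc (nodes h B) {0..<card (nodes h B)}"
begin

abbreviation "N \<equiv> nbrs h B g code"

lemma g_lt: "p < 2^B \<Longrightarrow> g p < 2^B"
  using permutes_in_image[OF g_permutes] by simp

lemma ex_g_eq: "j < 2^B \<Longrightarrow> \<exists>p<2^B. g p = j"
  using permutes_image[OF g_permutes] by (metis atLeastLessThan_iff imageE zero_le)

lemma Arm_1_in_image_g: "j < 2^B \<Longrightarrow> Arm j (Suc 0) \<in> (\<lambda>p. Arm (g p) (Suc 0)) ` {0..<2^B}"
  using ex_g_eq by force

lemma nbrs_Hub_iff: "y \<in> set (N Hub) \<longleftrightarrow> (\<exists>j<2^B. y = Arm j 1) \<or> y = Side True 1 \<or> y = Side False 1"
  using g_lt Arm_1_in_image_g by auto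

lemma nbrs_sym: "x \<in> nodes h B \<Longrightarrow> y \<in> set (N x) \<Longrightarrow> x \<in> set (N y)"
  using h_ge by (cases x) (auto simp: Arm_1_in_image_g partner_partner partner_div2 split: if_splits)

lemma hd_nbrs:
  assumes "x \<in> nodes h B" "x \<noteq> Hub"
  shows "N x \<noteq> []" "hd (N x) \<in> nodes h B" "hub_dist h (hd (N x)) = hub_dist h x - 1" "0 < hub_dist h x"
  using assms h_ge by (cases x; auto)+

lemma nbrs_reach_Hub: "x \<in> nodes h B \<Longrightarrow> (\<lambda>a b. b \<in> set (N a))\<^sup>*\<^sup>* x Hub"
proof (induction "hub_dist h x" arbitrary: x rule: less_induct)
  case less
  show ?case
  proof (cases "x = Hub")
    case False
    then have "(\<lambda>a b. b \<in> set (N a))\<^sup>*\<^sup>* (hd (N x)) Hub"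
      using less hd_nbrs[OF less.prems] by simp
    then show ?thesis using hd_nbrs(1)[OF less.prems False]
      by (meson converse_rtranclp_into_rtranclp list.set_sel(1))
  qed simp
qed

sublocale nbr_lists "nodes h B" N enc Hub
proof
  fix x assume x: "x \<in> nodes h B"
  have "inj_on (\<lambda>p. Arm (g p) (Suc 0)) {0..<2 ^ B}"
    using permutes_inj_on[OF g_permutes] by (auto simp: inj_on_def)
  then show "distinct (N x)" using x by (cases x) (auto simp: distinct_map inj_on_def partner_neq)
  show "set (N x) \<subseteq> nodes h B" using x h_ge g_lt by (cases x) (auto simp: partner_lt)
  show "x \<notin> set (N x)" using x by (cases x) (auto simp: partner_neq[symmetric])
  show "\<And>y. y \<in> set (N x) \<Longrightarrow> x \<in> set (N y)" by (rule nbrs_sym[OF x])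
  show "(\<lambda>a b. b \<in> set (N a))\<^sup>*\<^sup>* x Hub" by (rule nbrs_reach_Hub[OF x])
qed (use finite_nodes enc_bij in \<open>auto\<close>)

end

subsection \<open>Election index of the lower-bound graphs\<close>

context lb_graph
begin

lemma ex_node: "u < gsize G \<Longrightarrow> \<exists>x\<in>nodes h B. u = enc x"
  using ex_enc gsize_G by simp

lemma even_two_pow_plus_two: "even ((2::nat)^B + 2)"
  using B_ge by simp

lemma length_nbrs_eq_Hub: "x \<in> nodes h B \<Longrightarrow> length (N x) = 2^B + 2 \<Longrightarrow> x = Hub"
proof (cases x)
  case (Tip j)
  moreover assume "length (N x) = 2^B + 2"
  ultimately have "2*B + 1 = (2::nat)^B + 2" by simp
  then have "even (2*B + 1)" using even_two_pow_plus_two by (simp only:)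
  then show ?thesis by simp
qed (use B_ge in \<open>auto split: if_splits\<close>)

lemma length_nbrs_eq_Tip: "x \<in> nodes h B \<Longrightarrow> length (N x) = 2*B + 1 \<Longrightarrow> \<exists>k<2^B. x = Tip k"
proof (cases x)
  case Hub
  moreover assume "length (N x) = 2*B + 1"
  ultimately have "2*B + 1 = (2::nat)^B + 2" by simp
  then have "even (2*B + 1)" using even_two_pow_plus_two by (simp only:)
  then show ?thesis by simp
qed (use B_ge in \<open>auto split: if_splits\<close>)

lemma bview_unique_Hub: "bview_unique G m (enc Hub)"
  unfolding bview_unique_def
proof (intro allI impI)
  fix z assume z: "z < gsize G" and eq: "bview G m z = bview G m (enc Hub)"
  obtain x where x: "x \<in> nodes h B" "z = enc x" using ex_node[OF z] by auto
  have "length (N x) = 2^B + 2"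
    using bview_eq_imp_deg_eq[OF eq] x by (simp add: deg_enc)
  then show "z = enc Hub" using length_nbrs_eq_Hub x by blast
qed

lemma nbr_Tip: "j < 2^B \<Longrightarrow> i < 2*B \<Longrightarrow> nbr G (enc (Tip j)) (Suc i) = enc (Leaf j i)"
  using nbr_enc[of "Tip j" "Suc i"] by simp

lemma bview_unique_Tip:
  assumes j: "j < 2^B" and m: "1 \<le> m"
  shows "bview_unique G m (enc (Tip j))"
  unfolding bview_unique_def
proof (intro allI impI)
  fix z assume z: "z < gsize G" and eq: "bview G m z = bview G m (enc (Tip j))"
  obtain m' where m': "m = Suc m'" using m by (cases m) auto
  obtain x where x: "x \<in> nodes h B" "z = enc x" using ex_node[OF z] by auto
  have "length (N x) = 2*B + 1"
    using bview_eq_imp_deg_eq[OF eq] x j by (simp add: deg_enc)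
  then obtain k where k: "k < 2^B" "x = Tip k" using length_nbrs_eq_Tip x(1) by blast
  have "i \<in> code k \<longleftrightarrow> i \<in> code j" if i: "i < B" for i
  proof -
    have "Suc (2*i) < deg G z" using x k i by (simp add: deg_enc)
    then have "bview G m' (nbr G z (Suc (2*i))) = bview G m' (nbr G (enc (Tip j)) (Suc (2*i)))"
      using bview_Suc_eqD(2)[OF eq[unfolded m']] by blast
    then have "bview G m' (enc (Leaf k (2*i))) = bview G m' (enc (Leaf j (2*i)))"
      using nbr_Tip k j i x by simp
    then have "deg G (enc (Leaf k (2*i))) = deg G (enc (Leaf j (2*i)))" by (rule bview_eq_imp_deg_eq)
    then show ?thesis using k j i by (simp add: deg_enc split: if_splits)
  qed
  then have "code k = code j" using code_subset[OF k(1)] code_subset[OF j] by auto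
  then have "k = j" using inj_onD[OF code_inj] k j by simp
  then show "z = enc (Tip j)" using k x by simp
qed

lemma walk_to_Hub:
  "x \<in> nodes h B \<Longrightarrow> walk_ok G (enc x) (replicate (hub_dist h x) 0)
     \<and> walk_end G (enc x) (replicate (hub_dist h x) 0) = enc Hub"
proof (induction "hub_dist h x" arbitrary: x)
  case 0
  then have "x = Hub" by (cases x) auto
  then show ?case by simp
next
  case (Suc n)
  then have x: "x \<noteq> Hub" by auto
  have "nbr G (enc x) 0 = enc (hd (N x))"
    using nbr_enc[OF Suc.prems, of 0] hd_nbrs(1)[OF Suc.prems x] by (simp add: hd_conv_nth)
  moreover have "0 < deg G (enc x)" using hd_nbrs(1)[OF Suc.prems x] deg_enc[OF Suc.prems] by simp
  moreover have "walk_ok G (enc (hd (N x))) (replicate n 0)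
      \<and> walk_end G (enc (hd (N x))) (replicate n 0) = enc Hub"
    using Suc.hyps(1)[of "hd (N x)"] Suc.hyps(2) hd_nbrs(2,3)[OF Suc.prems x] by (metis diff_Suc_1)
  ultimately show ?case by (simp add: Suc.hyps(2)[symmetric])
qed

lemma ex_walk_to_unique_bview:
  assumes x: "x \<in> nodes h B"
  shows "\<exists>ps. walk_ok G (enc x) ps \<and> length ps \<le> h \<and> bview_unique G (h - length ps) (walk_end G (enc x) ps)"
proof (cases "hub_dist h x \<le> h")
  case True
  then show ?thesis using walk_to_Hub[OF x] bview_unique_Hub by (metis length_replicate)
next
  case False
  then consider j where "x = Tip j" "j < 2^B" | j i where "x = Leaf j i" "j < 2^B" "i < 2*B"
    using x by (cases x) auto
  then show ?thesis
  proof cases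
    case 1
    then show ?thesis using bview_unique_Tip h_ge by (intro exI[of _ "[]"]) simp
  next
    case 2
    then have "nbr G (enc x) 0 = enc (Tip j)" "0 < deg G (enc x)"
      using nbr_enc[OF x, of 0] deg_enc[OF x] by simp_all
    then show ?thesis using bview_unique_Tip[of j "h - 1"] 2 h_ge by (intro exI[of _ "[0]"]) simp
  qed
qed

lemma inj_on_bview_h: "inj_on (bview G h) {0..<gsize G}"
proof (rule inj_onI)
  fix u w assume u: "u \<in> {0..<gsize G}" and w: "w \<in> {0..<gsize G}" and eq: "bview G h u = bview G h w"
  obtain x where x: "x \<in> nodes h B" "u = enc x" using ex_node[of u] u by auto
  then obtain ps where "walk_ok G u ps" "length ps \<le> h" "bview_unique G (h - length ps) (walk_end G u ps)"
    using ex_walk_to_unique_bview by blast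
  then show "u = w" using bview_eq_by_unique_walk_end[OF wf_G] u w eq by simp
qed

lemma deg_Side: "1 \<le> t \<Longrightarrow> t \<le> h \<Longrightarrow> deg G (enc (Side s t)) = (if t < h then 2 else 1)"
  by (simp add: deg_enc)

lemma nbr_port_Side:
  assumes t: "2 \<le> t" "t \<le> h" and p: "p = 0 \<or> p = 1 \<and> t < h"
  shows "nbr G (enc (Side s t)) p = enc (Side s (if p = 0 then t - 1 else Suc t))"
    and "port G (enc (Side s (if p = 0 then t - 1 else Suc t))) (enc (Side s t)) = (if p = 0 then 1 else 0)"
proof -
  show "nbr G (enc (Side s t)) p = enc (Side s (if p = 0 then t - 1 else Suc t))"
    using nbr_enc[of "Side s t" p] t p by auto
  have mem: "Side s t \<in> nodes h B" "Side s (t - 1) \<in> nodes h B" using t by auto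
  have "t - 1 < h" "Suc (t - 1) = t" using t by auto
  then have "N (Side s (t - 1)) ! 1 = Side s t" "1 < length (N (Side s (t - 1)))" by simp_all
  then have down: "port G (enc (Side s (t - 1))) (enc (Side s t)) = 1"
    using port_enc[OF mem(2,1)] index_in_nth[OF distinct_nl[OF mem(2)]] by metis
  have up: "port G (enc (Side s (Suc t))) (enc (Side s t)) = 0" if "t < h"
  proof -
    have mem': "Side s (Suc t) \<in> nodes h B" using t that by auto
    have "N (Side s (Suc t)) ! 0 = Side s t" "0 < length (N (Side s (Suc t)))" using t by simp_all
    then show ?thesis using port_enc[OF mem' mem(1)] index_in_nth[OF distinct_nl[OF mem']] by metis
  qed
  show "port G (enc (Side s (if p = 0 then t - 1 else Suc t))) (enc (Side s t)) = (if p = 0 then 1 else 0)"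
    using p down up by auto
qed

lemma bview_Side_eq: "l < t \<Longrightarrow> t \<le> h \<Longrightarrow> bview G l (enc (Side True t)) = bview G l (enc (Side False t))"
proof (induction l arbitrary: t)
  case 0
  then show ?case using deg_Side by simp
next
  case (Suc l)
  show ?case
  proof (rule bview_Suc_eqI)
    show "deg G (enc (Side True t)) = deg G (enc (Side False t))" using Suc.prems deg_Side by simp
    fix p assume "p < deg G (enc (Side True t))"
    then have p: "p = 0 \<or> p = 1 \<and> t < h" using deg_Side Suc.prems by (auto split: if_splits)
    then show "port G (nbr G (enc (Side True t)) p) (enc (Side True t))
        = port G (nbr G (enc (Side False t)) p) (enc (Side False t))"
      using nbr_port_Side[of t p] Suc.prems by simp
    show "bview G l (nbr G (enc (Side True t)) p) = bview G l (nbr G (enc (Side False t)) p)"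
      using nbr_port_Side(1)[of t p] Suc p by auto
  qed
qed

lemma feasible_G: "feasible G"
  using inj_on_bview_h unfolding feasible_def by blast

lemma election_index_G: "election_index G = h"
  unfolding election_index_def
proof (rule Least_equality)
  show "inj_on (bview G h) {0..<gsize G}" by (rule inj_on_bview_h)
  fix l assume inj: "inj_on (bview G l) {0..<gsize G}"
  show "h \<le> l"
  proof (rule ccontr)
    assume "\<not> h \<le> l"
    then have "bview G l (enc (Side True h)) = bview G l (enc (Side False h))" by (simp add: bview_Side_eq)
    moreover have "Side True h \<in> nodes h B" "Side False h \<in> nodes h B" using h_ge by auto
    ultimately show False using inj enc_lt enc_eq_iff gsize_G by (force simp: inj_on_def)
  qed
qed

end

subsection \<open>Changing the hub ports\<close>

lemma nbrs_indep_off_Hub: "x \<noteq> Hub \<Longrightarrow> nbrs h B g code x = nbrs h B g' code x"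
  by (cases x) auto

lemma branch_nbrs: "y \<in> set (nbrs h B g code x) \<Longrightarrow> x \<noteq> Hub \<Longrightarrow> y \<noteq> Hub \<Longrightarrow> branch x = branch y"
  by (cases x) (auto split: if_splits)

lemma hub_dist_nbrs: "x \<in> nodes h B \<Longrightarrow> y \<in> set (nbrs h B g code x) \<Longrightarrow> hub_dist h x \<le> Suc (hub_dist h y)"
  by (cases x) (auto split: if_splits)

context lb_graph
begin

lemma set_nbrs_indep: "set (N x) = set (nbrs h B id code x)"
proof (cases x)
  case Hub
  have "(\<lambda>p. Arm (g p) 1) ` {0..<2^B} = (\<lambda>p. Arm p 1) ` (g ` {0..<2^B})" by (simp add: image_image)
  then show ?thesis using Hub permutes_image[OF g_permutes] by simp
qed auto

abbreviation "G\<^sub>0 \<equiv> pgraph_of_lists (nodes h B) (nbrs h B id code) enc"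

lemma adj_indep: "adj G = adj G\<^sub>0"
  using set_nbrs_indep by (simp add: pgraph_of_lists_def)

lemma port_indep: "u \<noteq> enc Hub \<Longrightarrow> port G u = port G\<^sub>0 u"
proof (cases "u < card (nodes h B)")
  case True
  then obtain x where x: "x \<in> nodes h B" "u = enc x" using ex_enc by blast
  moreover assume "u \<noteq> enc Hub"
  ultimately have "x \<noteq> Hub" by auto
  then show ?thesis using x nbrs_indep_off_Hub[of x h B g code id]
    by (simp add: pgraph_of_lists_def fun_eq_iff inv_enc)
qed (simp add: pgraph_of_lists_def fun_eq_iff)

abbreviation "label u \<equiv> branch (inv_into (nodes h B) enc u)"

lemma label_adj:
  assumes "adj G u w" "u \<noteq> enc Hub" "w \<noteq> enc Hub"
  shows "label u = label w"
proof -
  obtain x y where "x \<in> nodes h B" "y \<in> nodes h B" "u = enc x" "w = enc y" "y \<in> set (N x)"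
    using assms(1) adj_G_iff by blast
  moreover have "x \<noteq> Hub" "y \<noteq> Hub" using assms(2,3) calculation by auto
  ultimately show ?thesis using branch_nbrs by (simp add: inv_enc)
qed

lemma hub_dist_adj:
  "adj G u w \<Longrightarrow> hub_dist h (inv_into (nodes h B) enc u) \<le> Suc (hub_dist h (inv_into (nodes h B) enc w))"
  using hub_dist_nbrs by (auto simp: adj_G_iff inv_enc)

lemma Hub_notin_nbhd_Tip:
  assumes "j < 2^B" "r \<le> h"
  shows "enc Hub \<notin> nbhd G r (enc (Tip j))"
proof
  assume "enc Hub \<in> nbhd G r (enc (Tip j))"
  then have "hub_dist h (inv_into (nodes h B) enc (enc (Tip j)))
      \<le> hub_dist h (inv_into (nodes h B) enc (enc Hub)) + r"
    using nbhd_potential_le[of G "\<lambda>u. hub_dist h (inv_into (nodes h B) enc u)", OF hub_dist_adj] by simp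
  then show False using assms by (simp add: inv_enc)
qed

lemma adj_Hub_label:
  assumes "adj G u (enc Hub)" "label u = Some j"
  shows "u = enc (Arm j 1)"
proof -
  obtain x where x: "x \<in> nodes h B" "u = enc x" "Hub \<in> set (N x)"
    using assms(1) by (auto simp: adj_G_iff enc_eq_iff)
  then have "x \<in> set (N Hub)" using nbrs_sym by blast
  then show ?thesis using x assms(2) by (auto simp: nbrs_Hub_iff inv_enc)
qed

lemma nbr_Hub: "p < 2^B \<Longrightarrow> nbr G (enc Hub) p = enc (Arm (g p) 1)"
  using nbr_enc[of Hub p] by (simp add: nth_append)

lemma port_Hub_Arm: "p < 2^B \<Longrightarrow> port G (enc Hub) (enc (Arm (g p) 1)) = p"
  using port_enc[of Hub "Arm (g p) 1"] index_in_nth[OF distinct_nl, of Hub p] g_lt h_ge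
  by (simp add: nth_append)

end

lemma lb_graph_permutation_eq:
  assumes X: "lb_graph h B g1 code enc" and Y: "lb_graph h B g2 code enc"
    and E1: "elects_in_time A (pgraph_of_lists (nodes h B) (nbrs h B g1 code) enc) h s"
    and E2: "elects_in_time A (pgraph_of_lists (nodes h B) (nbrs h B g2 code) enc) h s"
  shows "g1 = g2"
proof (rule ccontr)
  interpret X: lb_graph h B g1 code enc by (rule X)
  interpret Y: lb_graph h B g2 code enc by (rule Y)
  obtain l where l: "\<forall>v<gsize X.G. simple_path_to X.G v (node_output A s X.G v) l"
    using E1 unfolding elects_in_time_def by blast
  have leader: "X.label l = Some j"
    if j: "j < 2^B" and p: "p1 < 2^B" "p2 < 2^B" "g1 p1 = j" "g2 p2 = j" "p1 \<noteq> p2" for j p1 p2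
  proof -
    have "X.label l = X.label (enc (Tip j))"
    proof (rule leader_label_eq[OF X.wf_G _ _ _ X.label_adj _ _ _ _ E1 E2 l])
      show "gsize Y.G = gsize X.G" by (simp add: X.gsize_G Y.gsize_G)
      show "adj Y.G = adj X.G" by (simp add: X.adj_indep Y.adj_indep)
      show "port Y.G u = port X.G u" if "u \<noteq> enc Hub" for u using that X.port_indep Y.port_indep by simp
      show "enc (Tip j) < gsize X.G" using X.enc_lt X.gsize_G j by simp
      show "enc (Tip j) \<noteq> enc Hub" using X.enc_eq_iff j by simp
      show "enc Hub \<notin> nbhd X.G r (enc (Tip j))" if "r \<le> h" for r using X.Hub_notin_nbhd_Tip j that .
      fix u assume "adj X.G u (enc Hub)" and "X.label u = X.label (enc (Tip j))"
      then have "u = enc (Arm j 1)" using X.adj_Hub_label j by (simp add: X.inv_enc)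
      then show "port X.G (enc Hub) u \<noteq> port Y.G (enc Hub) u"
        using X.port_Hub_Arm Y.port_Hub_Arm p by metis
    qed
    then show ?thesis using j by (simp add: X.inv_enc)
  qed
  assume "g1 \<noteq> g2"
  then obtain p where p: "g1 p \<noteq> g2 p" by auto
  then have "p < 2^B" using permutes_not_in[OF X.g_permutes] permutes_not_in[OF Y.g_permutes] by force
  moreover obtain q1 where "q1 < 2^B" "g2 q1 = g1 p" using Y.ex_g_eq X.g_lt calculation by blast
  moreover obtain q2 where "q2 < 2^B" "g1 q2 = g2 p" using X.ex_g_eq Y.g_lt calculation by blast
  moreover have "q1 \<noteq> p" "q2 \<noteq> p" using calculation p by auto
  ultimately have "X.label l = Some (g1 p)" "X.label l = Some (g2 p)"
    using leader[of "g1 p" p q1] leader[of "g2 p" q2 p] X.g_lt Y.g_lt by auto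
  then show False using p by simp
qed

lemma card_bool_lists_shorter: "card {xs :: bool list. length xs < m} < 2 ^ m"
proof (induction m)
  case (Suc m)
  have "{xs :: bool list. length xs < Suc m} = {xs. length xs < m} \<union> {xs. length xs = m}" by auto
  then have "card {xs :: bool list. length xs < Suc m}
      \<le> card {xs :: bool list. length xs < m} + card {xs :: bool list. length xs = m}"
    by (metis card_Un_le)
  then show ?case using Suc.IH card_lists_length_eq[of "UNIV :: bool set" m] by simp
qed simp

lemma ex_long_if_inj_on:
  fixes f :: "'a \<Rightarrow> bool list"
  assumes "inj_on f F" "finite F" "2 ^ m \<le> card F"
  shows "\<exists>x\<in>F. m \<le> length (f x)"
proof (rule ccontr)
  assume "\<not> (\<exists>x\<in>F. m \<le> length (f x))"
  then have "f ` F \<subseteq> {xs. length xs < m}" by auto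
  moreover have "finite {xs :: bool list. length xs < m}"
    using finite_lists_length_le[of "UNIV :: bool set" m] by (rule finite_subset[rotated]) auto
  ultimately have "card (f ` F) \<le> card {xs :: bool list. length xs < m}" by (rule card_mono[rotated])
  then show False using card_bool_lists_shorter[of m] card_image[OF assms(1)] assms(3) by simp
qed

lemma pow_le_fact: "k \<le> L \<Longrightarrow> k ^ (L - k) \<le> fact L"
proof (induction L)
  case (Suc L)
  show ?case
  proof (cases "k = Suc L")
    case False
    then have k: "k \<le> L" using Suc.prems by simp
    have "k ^ (Suc L - k) = k * k ^ (L - k)" using k by (simp add: Suc_diff_le)
    also have "\<dots> \<le> Suc L * fact L" using Suc.IH[OF k] k by (intro mult_mono) auto
    finally show ?thesis by simp
  next
    case True
    have "1 \<le> (fact (Suc L) :: nat)" by (rule fact_ge_1)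
    then show ?thesis using True by simp
  qed
qed simp

lemma two_pow_le_fact_two_pow: "1 \<le> B \<Longrightarrow> (2::nat) ^ ((B - 1) * 2^(B - 1)) \<le> fact (2^B)"
proof -
  assume "1 \<le> B"
  then have "(2::nat)^B - 2^(B - 1) = 2^(B - 1)" "(2::nat)^(B - 1) \<le> 2^B"
    by (cases B; simp)+
  then show ?thesis using pow_le_fact[of "(2::nat)^(B - 1)" "2^B"] by (simp add: power_mult)
qed

definition lb_graphs :: "nat \<Rightarrow> nat \<Rightarrow> (nat \<Rightarrow> nat set) \<Rightarrow> (node \<Rightarrow> nat) \<Rightarrow> pgraph set" where
  "lb_graphs h B code enc =
     (\<lambda>g. pgraph_of_lists (nodes h B) (nbrs h B g code) enc) ` {g. g permutes {0..<2^B}}"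

lemma card_lb_graphs:
  assumes "\<And>g. g permutes {0..<2^B} \<Longrightarrow> lb_graph h B g code enc"
  shows "card (lb_graphs h B code enc) = fact (2^B)"
proof -
  have "inj_on (\<lambda>g. pgraph_of_lists (nodes h B) (nbrs h B g code) enc) {g. g permutes {0..<2^B}}"
  proof (rule inj_onI, rule ext)
    fix g1 g2 p assume g1: "g1 \<in> {g. g permutes {0..<2^B}}" and g2: "g2 \<in> {g. g permutes {0..<2^B}}"
      and eq: "pgraph_of_lists (nodes h B) (nbrs h B g1 code) enc = pgraph_of_lists (nodes h B) (nbrs h B g2 code) enc"
    interpret X: lb_graph h B g1 code enc using assms g1 by simp
    interpret Y: lb_graph h B g2 code enc using assms g2 by simp
    show "g1 p = g2 p"
    proof (cases "p < 2^B")
      case True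
      then have "enc (Arm (g1 p) 1) = enc (Arm (g2 p) 1)" using X.nbr_Hub Y.nbr_Hub eq by metis
      then show ?thesis using X.enc_eq_iff X.g_lt Y.g_lt True X.h_ge by simp
    qed (use permutes_not_in[OF X.g_permutes] permutes_not_in[OF Y.g_permutes] in simp)
  qed
  then show ?thesis
    unfolding lb_graphs_def by (simp add: card_image card_permutations)
qed

lemma ex_lb_graph_params:
  assumes "2 \<le> h" "1 \<le> B"
  obtains code enc where "\<And>g. g permutes {0..<2^B} \<Longrightarrow> lb_graph h B g code enc"
proof -
  have "card {0..<(2::nat)^B} = card (Pow {0..<B})" by (simp add: card_Pow)
  then obtain code where code: "bij_betw code {0..<(2::nat)^B} (Pow {0..<B})"
    using finite_same_card_bij[of "{0..<(2::nat)^B}" "Pow {0..<B}"] by auto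
  obtain enc where enc: "bij_betw enc (nodes h B) {0..<card (nodes h B)}"
    using ex_bij_betw_finite_nat[OF finite_nodes] by auto
  show ?thesis
  proof (rule that)
    fix g :: "nat \<Rightarrow> nat" assume "g permutes {0..<2^B}"
    then show "lb_graph h B g code enc"
      by unfold_locales (use assms code enc in \<open>auto simp: bij_betw_def\<close>)
  qed
qed

lemma inj_on_advice_lb_graphs:
  assumes L: "\<And>g. g permutes {0..<2^B} \<Longrightarrow> lb_graph h B g code enc"
    and E: "\<forall>G\<in>lb_graphs h B code enc. elects_in_time A G h (adv G)"
  shows "inj_on adv (lb_graphs h B code enc)"
proof (rule inj_onI)
  fix G1 G2 assume G1: "G1 \<in> lb_graphs h B code enc" and G2: "G2 \<in> lb_graphs h B code enc"
    and eq: "adv G1 = adv G2"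
  then obtain g1 g2 where g: "g1 permutes {0..<2^B}" "g2 permutes {0..<2^B}"
    and G: "G1 = pgraph_of_lists (nodes h B) (nbrs h B g1 code) enc"
      "G2 = pgraph_of_lists (nodes h B) (nbrs h B g2 code) enc"
    unfolding lb_graphs_def by blast
  have "elects_in_time A G1 h (adv G1)" "elects_in_time A G2 h (adv G1)"
    using E G1 G2 eq by auto
  then have "g1 = g2" using lb_graph_permutation_eq[OF L[OF g(1)] L[OF g(2)]] G by simp
  then show "G1 = G2" using G by simp
qed

lemma lb_graphs_advice_length:
  assumes "2 \<le> h" "1 \<le> B"
  shows "\<exists>F. finite F
    \<and> (\<forall>G\<in>F. wf_pgraph G \<and> gsize G = card (nodes h B) \<and> feasible G \<and> election_index G = h)
    \<and> (\<forall>(A::algorithm) (adv::pgraph \<Rightarrow> bool list). (\<forall>G\<in>F. elects_in_time A G h (adv G))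
         \<longrightarrow> (\<exists>G\<in>F. (B - 1) * 2^(B - 1) \<le> length (adv G)))"
proof -
  obtain code enc where L: "\<And>g. g permutes {0..<2^B} \<Longrightarrow> lb_graph h B g code enc"
    using ex_lb_graph_params[OF assms] by blast
  let ?F = "lb_graphs h B code enc"
  have "finite ?F" unfolding lb_graphs_def using finite_permutations by blast
  moreover have "wf_pgraph H \<and> gsize H = card (nodes h B) \<and> feasible H \<and> election_index H = h"
    if "H \<in> ?F" for H
  proof -
    obtain g where g: "g permutes {0..<2^B}" and H: "H = pgraph_of_lists (nodes h B) (nbrs h B g code) enc"
      using \<open>H \<in> ?F\<close> unfolding lb_graphs_def by blast
    interpret lb_graph h B g code enc using L[OF g] .
    show ?thesis unfolding H using wf_G gsize_G feasible_G election_index_G by simp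
  qed
  moreover have "\<exists>G\<in>?F. (B - 1) * 2^(B - 1) \<le> length (adv G)"
    if "\<forall>G\<in>?F. elects_in_time A G h (adv G)" for A adv
    using ex_long_if_inj_on[OF inj_on_advice_lb_graphs[OF L that] \<open>finite ?F\<close>]
      card_lb_graphs[OF L] two_pow_le_fact_two_pow assms(2) by simp
  ultimately show ?thesis by blast
qed

lemma card_nodes_le_linear:
  assumes "2 \<le> B"
  shows "card (nodes h B) \<le> 4 * (2*h + 5) * ((B - 1) * 2^(B - 1))"
proof -
  obtain b where b: "B = b + 2" using assms by (metis add.commute le_add_diff_inverse)
  define L where "L = (2::nat)^(b + 1)"
  have L2: "2 \<le> L" unfolding L_def by simp
  have "card (nodes h B) \<le> 3 + 2*h + 2*L*(h + 2 + 2*(b + 2))"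
    using card_nodes_le[of h B] by (simp add: L_def b)
  also have "\<dots> = 3 + 2*h + 2*(h*L) + 4*(b*L) + 12*L" by (simp add: algebra_simps)
  also have "\<dots> \<le> 8*(h*(b*L)) + 8*(h*L) + 20*(b*L) + 20*L"
    using L2 mult_le_mono2[OF L2, of h] by linarith
  also have "\<dots> = 4 * (2*h + 5) * ((B - 1) * 2^(B - 1))" by (simp add: L_def b algebra_simps)
  finally show ?thesis .
qed

lemma log_sq_le: "1 \<le> t \<Longrightarrow> (log 2 t)^2 \<le> 16 * t"
proof -
  assume t: "1 \<le> t"
  have "ln t = 2 * ln (sqrt t)" using ln_sqrt[of t] t by simp
  also have "\<dots> \<le> 2 * sqrt t" using ln_le_minus_one[of "sqrt t"] t by simp
  finally have "(ln t)^2 \<le> (2 * sqrt t)^2" using t by (intro power_mono) simp_all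
  also have "\<dots> = 16 * t * (1/2)^2" using t by (simp add: power_mult_distrib power2_eq_square)
  also have "\<dots> \<le> 16 * t * (ln 2)^2"
  proof (intro mult_left_mono power_mono)
    show "1/2 \<le> ln (2::real)" using ln_le_minus_one[of "1/2::real"] by (simp add: ln_div)
  qed (use t in simp_all)
  finally show ?thesis by (simp add: log_def power_divide divide_le_eq)
qed

lemma linear_bound_dominates:
  fixes n m :: nat and K :: real
  assumes "2 \<le> n" "0 < K" "real n \<le> K * real m"
  shows "1 / (16 * K) * real n * (log 2 (log 2 (real n)))\<^sup>2 / log 2 (real n) \<le> real m"
proof -
  have t: "1 \<le> log 2 (real n)" using assms(1) by simp
  then have "(log 2 (log 2 (real n)))\<^sup>2 / log 2 (real n) \<le> 16"
    using log_sq_le[OF t] by (simp add: divide_le_eq)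
  then have "1 / (16 * K) * real n * ((log 2 (log 2 (real n)))\<^sup>2 / log 2 (real n)) \<le> 1 / (16 * K) * real n * 16"
    using assms(2) by (intro mult_left_mono) auto
  also have "\<dots> \<le> real m" using assms(2,3) by (simp add: field_simps)
  finally show ?thesis by simp
qed

lemma lb_graphs_advice_bound:
  fixes h B :: nat
  defines "n \<equiv> card (nodes h B)"
  assumes "2 \<le> h" "2 \<le> B"
  shows "\<exists>F. finite F
    \<and> (\<forall>G\<in>F. wf_pgraph G \<and> gsize G = n \<and> feasible G \<and> election_index G = h)
    \<and> (\<forall>(A::algorithm) (adv::pgraph \<Rightarrow> bool list). (\<forall>G\<in>F. elects_in_time A G h (adv G))
         \<longrightarrow> (\<exists>G\<in>F. real (length (adv G))
                 \<ge> 1 / (64 * (2 * real h + 5)) * real n * (log 2 (log 2 (real n)))\<^sup>2 / log 2 (real n)))"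
proof -
  let ?m = "(B - 1) * 2^(B - 1)"
  have n: "2 \<le> n"
    using card_nodes_ge[of B h] assms(3) unfolding n_def
    by (metis le_trans one_le_numeral power_increasing power_one_right)
  have "real n \<le> real (4 * (2 * h + 5) * ?m)"
    using card_nodes_le_linear[OF assms(3), of h] unfolding n_def by (simp only: of_nat_le_iff)
  then have "real n \<le> 4 * (2 * real h + 5) * real ?m" by simp
  from linear_bound_dominates[OF n _ this]
  have bound: "1 / (64 * (2 * real h + 5)) * real n * (log 2 (log 2 (real n)))\<^sup>2 / log 2 (real n) \<le> real ?m"
    by simp
  obtain F where F: "finite F" "\<forall>G\<in>F. wf_pgraph G \<and> gsize G = n \<and> feasible G \<and> election_index G = h"
    "\<forall>(A::algorithm) adv. (\<forall>G\<in>F. elects_in_time A G h (adv G)) \<longrightarrow> (\<exists>G\<in>F. ?m \<le> length (adv G))"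
    using lb_graphs_advice_length[of h B] assms(2,3) unfolding n_def by auto
  show ?thesis
  proof (intro exI conjI allI impI)
    fix A :: algorithm and adv assume "\<forall>G\<in>F. elects_in_time A G h (adv G)"
    then obtain G where G: "G \<in> F" "?m \<le> length (adv G)" using F(3) by blast
    then have "real ?m \<le> real (length (adv G))" by (simp only: of_nat_le_iff)
    then show "\<exists>G\<in>F. real (length (adv G))
        \<ge> 1 / (64 * (2 * real h + 5)) * real n * (log 2 (log 2 (real n)))\<^sup>2 / log 2 (real n)"
      using G(1) bound by (meson order.trans)
  qed (use F in blast)+
qed

theorem theorem3:
  fixes \<phi> :: nat
  assumes "\<phi> > 1"
  shows "\<exists>c::real. c > 0 \<and>
    infinite {n::nat. \<exists>F::pgraph set. finite F \<and>
       (\<forall>G\<in>F. wf_pgraph G \<and> gsize G = n \<and> feasible G \<and> election_index G = \<phi>) \<and>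
       (\<forall>(A::algorithm) (adv::pgraph \<Rightarrow> bool list).
          (\<forall>G\<in>F. elects_in_time A G \<phi> (adv G)) \<longrightarrow>
          (\<exists>G\<in>F. real (length (adv G)) \<ge>
                    c * real n * (log 2 (log 2 (real n)))\<^sup>2 / log 2 (real n)))}"
    (is "\<exists>c. c > 0 \<and> infinite (?S c)")
proof (intro exI conjI)
  let ?c = "1 / (64 * (2 * real \<phi> + 5))"
  show "?c > 0" by simp
  have mem: "card (nodes \<phi> B) \<in> ?S ?c" if "2 \<le> B" for B
    using lb_graphs_advice_bound[of \<phi> B] assms that by simp
  show "infinite (?S ?c)"
    unfolding infinite_nat_iff_unbounded_le
  proof
    fix m
    have "m \<le> card (nodes \<phi> (m + 2))"
      using card_nodes_ge[of "m + 2" \<phi>] less_exp[of "m + 2"] by simp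
    then show "\<exists>n\<ge>m. n \<in> ?S ?c" using mem[of "m + 2"] by auto
  qed
qed

end
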